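(* Let $(W,S)$ be an even Coxeter system, i.e. $m_{s,t}$ is even or $\infty$ for all distinct $s,t\in S$, and let $x\in S$. Then $W^{\perp x}$ is finitely generated if and only if there are only finitely many $s\in S$ with $m_{x,s}<\infty$.
   Context: $(W,S)$ is a Coxeter system with $S$ possibly infinite; $m_{s,t}$ is the order of $st$. Geometric representation: $V$ has basis $\{\alpha_s\}_{s\in S}$ with symmetric bilinear form $\langle\alpha_s,\alpha_t\rangle=-\cos(\pi/m_{s,t})$ ($-1$ if $m_{s,t}=\infty$); $W$ acts by $s\cdot v=v-2\langle\alpha_s,v\rangle\alpha_s$; $\Phi=W\cdot\{\alpha_s\}$; for $\gamma=w\cdot\alpha_s$, $s_\gamma=wsw^{-1}$. $W^{\perp x}$ is the subgroup generated by $\{s_\gamma:\gamma\in\Phi,\ \langle\gamma,\alpha_x\rangle=0\}$. *)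

theory Defs
  imports Complex_Main "HOL-Library.Extended_Nat"
begin

definition coxeter_matrix :: "'a set \<Rightarrow> ('a \<Rightarrow> 'a \<Rightarrow> enat) \<Rightarrow> bool" where
  "coxeter_matrix S m \<longleftrightarrow>
     (\<forall>s\<in>S. m s s = 1) \<and> (\<forall>s\<in>S. \<forall>t\<in>S. m s t = m t s) \<and>
     (\<forall>s\<in>S. \<forall>t\<in>S. s \<noteq> t \<longrightarrow> m s t \<ge> 2)"

definition even_coxeter :: "'a set \<Rightarrow> ('a \<Rightarrow> 'a \<Rightarrow> enat) \<Rightarrow> bool" where
  "even_coxeter S m \<longleftrightarrow>
     (\<forall>s\<in>S. \<forall>t\<in>S. s \<noteq> t \<longrightarrow> m s t = \<infinity> \<or> (\<exists>k::nat. m s t = enat (2 * k)))"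

text \<open>Vectors of V are functions S -> real of finite support; <alpha_s, alpha_t>.\<close>
definition bcoef :: "('a \<Rightarrow> 'a \<Rightarrow> enat) \<Rightarrow> 'a \<Rightarrow> 'a \<Rightarrow> real" where
  "bcoef m s t = (case m s t of enat n \<Rightarrow> - cos (pi / real n) | \<infinity> \<Rightarrow> -1)"

definition vsupp :: "'a set \<Rightarrow> ('a \<Rightarrow> real) \<Rightarrow> 'a set" where
  "vsupp S v = {s\<in>S. v s \<noteq> 0}"

text \<open>The symmetric bilinear form (extended by 0 to vectors of infinite support).\<close>
definition bform :: "'a set \<Rightarrow> ('a \<Rightarrow> 'a \<Rightarrow> enat) \<Rightarrow> ('a \<Rightarrow> real) \<Rightarrow> ('a \<Rightarrow> real) \<Rightarrow> real" where
  "bform S m u v = (\<Sum>s\<in>vsupp S u. \<Sum>t\<in>vsupp S v. u s * v t * bcoef m s t)"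

definition simple_root :: "'a \<Rightarrow> ('a \<Rightarrow> real)" where
  "simple_root s = (\<lambda>t. if t = s then 1 else 0)"

definition sref :: "'a set \<Rightarrow> ('a \<Rightarrow> 'a \<Rightarrow> enat) \<Rightarrow> 'a \<Rightarrow> ('a \<Rightarrow> real) \<Rightarrow> ('a \<Rightarrow> real)" where
  "sref S m s v = (\<lambda>t. v t - 2 * bform S m (simple_root s) v * simple_root s t)"

inductive_set gen_group :: "('b \<Rightarrow> 'b) set \<Rightarrow> ('b \<Rightarrow> 'b) set" for A where
  gen_id: "id \<in> gen_group A"
| gen_base: "a \<in> A \<Longrightarrow> a \<in> gen_group A"
| gen_comp: "f \<in> gen_group A \<Longrightarrow> g \<in> gen_group A \<Longrightarrow> f \<circ> g \<in> gen_group A"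
| gen_inv: "f \<in> gen_group A \<Longrightarrow> inv f \<in> gen_group A"

text \<open>W, realised through its (faithful) geometric representation.\<close>
definition coxW :: "'a set \<Rightarrow> ('a \<Rightarrow> 'a \<Rightarrow> enat) \<Rightarrow> (('a \<Rightarrow> real) \<Rightarrow> ('a \<Rightarrow> real)) set" where
  "coxW S m = gen_group (sref S m ` S)"

definition roots :: "'a set \<Rightarrow> ('a \<Rightarrow> 'a \<Rightarrow> enat) \<Rightarrow> ('a \<Rightarrow> real) set" where
  "roots S m = {w (simple_root s) | w s. w \<in> coxW S m \<and> s \<in> S}"

definition perp_reflections :: "'a set \<Rightarrow> ('a \<Rightarrow> 'a \<Rightarrow> enat) \<Rightarrow> 'a \<Rightarrow> (('a \<Rightarrow> real) \<Rightarrow> ('a \<Rightarrow> real)) set" where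
  "perp_reflections S m x =
     {w \<circ> sref S m s \<circ> inv w | w s. w \<in> coxW S m \<and> s \<in> S \<and>
        bform S m (w (simple_root s)) (simple_root x) = 0}"

definition Wperp :: "'a set \<Rightarrow> ('a \<Rightarrow> 'a \<Rightarrow> enat) \<Rightarrow> 'a \<Rightarrow> (('a \<Rightarrow> real) \<Rightarrow> ('a \<Rightarrow> real)) set" where
  "Wperp S m x = gen_group (perp_reflections S m x)"

definition finitely_generated :: "('b \<Rightarrow> 'b) set \<Rightarrow> bool" where
  "finitely_generated G \<longleftrightarrow> (\<exists>F. finite F \<and> F \<subseteq> G \<and> gen_group F = G)"

end

theory Submission
  imports Defs
begin

(* An element of W is a product of simple
   reflections and moves only the coordinates indexed by the letters of such a word, while for
   m(x,s) = 2k finite the vector eta(x,s) = (cos(pi/2k) alpha_x + alpha_s) / sin(pi/2k) is a root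
   orthogonal to alpha_x whose reflection moves the s-coordinate; so finitely many generators of
   W^{perp x} only reach finitely many such s.
   Conversely, W^{perp x} is generated by the reflections in the roots eta(x,t).  Every root is
   nonnegative or nonpositive (proved through the dihedral parabolic subgroups, which is where the
   evenness of the Coxeter matrix enters), so a reflection s_g with g orthogonal to alpha_x can be
   written with g nonnegative, and then <alpha_t, g> > 0 and g_t > 0 for some t.  Applying the
   alternating word x t x t ... to g shortens s_g at every step as long as the Chebyshev values
   U_j(cos(pi/m(x,t))) stay positive.  For m(x,t) infinite this never stops, which is absurd; for
   m(x,t) = 2k the word of length 2k-1 is the reflection in eta(x,t), and it conjugates s_g to the
   reflection in a shorter root orthogonal to alpha_x, unless g = eta(x,t) already. *)

lemma gen_group_subset:
  assumes "A \<subseteq> G" "id \<in> G" "\<And>f g. f \<in> G \<Longrightarrow> g \<in> G \<Longrightarrow> f \<circ> g \<in> G"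
    and "\<And>f. f \<in> G \<Longrightarrow> inv f \<in> G"
  shows "gen_group A \<subseteq> G"
proof
  fix g assume "g \<in> gen_group A"
  then show "g \<in> G" by induction (use assms in blast)+
qed

lemma gen_group_mono: "A \<subseteq> gen_group C \<Longrightarrow> gen_group A \<subseteq> gen_group C"
  by (rule gen_group_subset) (auto intro: gen_group.intros)

(* Shifted index: cheb_U c n is the Chebyshev polynomial U_(n-1) of the second kind, evaluated at c. *)

fun cheb_U :: "real \<Rightarrow> nat \<Rightarrow> real" where
  "cheb_U c 0 = 0"
| "cheb_U c (Suc 0) = 1"
| "cheb_U c (Suc (Suc n)) = 2 * c * cheb_U c (Suc n) - cheb_U c n"

lemma cheb_U_1: "cheb_U 1 n = real n"
  by (induction "1::real" n rule: cheb_U.induct) (auto simp: algebra_simps)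

lemma cheb_U_cos:
  assumes "sin \<theta> \<noteq> 0"
  shows "cheb_U (cos \<theta>) n = sin (real n * \<theta>) / sin \<theta>"
proof (induction "cos \<theta>" n rule: cheb_U.induct)
  case (3 n)
  have "real (Suc (Suc n)) * \<theta> = real (Suc n) * \<theta> + \<theta>" "real n * \<theta> = real (Suc n) * \<theta> - \<theta>"
    by (simp_all add: algebra_simps)
  then have "sin (real (Suc (Suc n)) * \<theta>) = 2 * cos \<theta> * sin (real (Suc n) * \<theta>) - sin (real n * \<theta>)"
    by (simp only: sin_add sin_diff) (simp add: algebra_simps)
  then show ?case using 3 assms by (simp add: field_simps)
qed (use assms in simp_all)

lemma sin_pi_div_even_pos: "k \<ge> 1 \<Longrightarrow> sin (pi / real (2 * k)) > 0"
  by (rule sin_gt_zero) (auto simp: field_simps)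

lemma cheb_U_cos_pi_div_even:
  assumes "k \<ge> 1"
  shows "cheb_U (cos (pi / real (2 * k))) n = sin (real n * pi / real (2 * k)) / sin (pi / real (2 * k))"
  using cheb_U_cos[of "pi / real (2 * k)" n] sin_pi_div_even_pos[OF assms] by simp

context
  fixes k :: nat and c s :: real
  assumes k: "k \<ge> 1"
  defines "c \<equiv> cos (pi / real (2 * k))" and "s \<equiv> sin (pi / real (2 * k))"
begin

private lemma cheb_U_eq: "cheb_U c n = sin (real n * pi / real (2 * k)) / s"
  unfolding c_def s_def by (rule cheb_U_cos_pi_div_even[OF k])

private lemma s_pos: "s > 0"
  unfolding s_def by (rule sin_pi_div_even_pos[OF k])

lemma cheb_U_cos_pi_div_even_nonneg: "n \<le> 2 * k \<Longrightarrow> cheb_U c n \<ge> 0"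
  using s_pos k by (auto simp: cheb_U_eq field_simps intro!: divide_nonneg_pos sin_ge_zero)

lemma cheb_U_cos_pi_div_even_pos: "0 < n \<Longrightarrow> n < 2 * k \<Longrightarrow> cheb_U c n > 0"
  using s_pos k by (auto simp: cheb_U_eq field_simps intro!: divide_pos_pos sin_gt_zero)

lemma cheb_U_cos_pi_div_even_2k: "cheb_U c (2 * k) = 0"
  using k by (simp add: cheb_U_eq)

lemma cheb_U_cos_pi_div_even_2k_plus_1: "cheb_U c (Suc (2 * k)) = -1"
proof -
  have "real (Suc (2 * k)) * pi / real (2 * k) = pi + pi / real (2 * k)"
    using k by (simp add: field_simps)
  then show ?thesis using s_pos by (simp add: cheb_U_eq s_def)
qed

lemma cheb_U_cos_pi_div_even_2k_minus_1: "cheb_U c (2 * k - 1) = 1"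
proof -
  have "real (2 * k - 1) * pi / real (2 * k) = pi - pi / real (2 * k)"
    using k by (simp add: of_nat_diff field_simps)
  then show ?thesis using s_pos by (simp add: cheb_U_eq s_def)
qed

lemma cheb_U_cos_pi_div_even_2k_minus_2: "cheb_U c (2 * k - 2) = 2 * c"
proof -
  have "2 * k = Suc (Suc (2 * k - 2))" "Suc (2 * k - 2) = 2 * k - 1" using k by simp_all
  then have "cheb_U c (2 * k) = 2 * c * cheb_U c (2 * k - 1) - cheb_U c (2 * k - 2)"
    by (metis cheb_U.simps(3))
  then show ?thesis
    using cheb_U_cos_pi_div_even_2k cheb_U_cos_pi_div_even_2k_minus_1 by simp
qed

lemma cheb_U_cos_pi_div_even_k: "cheb_U c k = 1 / s"
  using k by (simp add: cheb_U_eq)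

lemma cheb_U_cos_pi_div_even_k_minus_1: "cheb_U c (k - 1) = c / s"
proof -
  have "real (k - 1) * pi / real (2 * k) = pi / 2 - pi / real (2 * k)"
    using k by (simp add: of_nat_diff field_simps)
  then have "sin (real (k - 1) * pi / real (2 * k)) = c"
    by (simp add: c_def cos_sin_eq)
  then show ?thesis by (simp add: cheb_U_eq)
qed

end

fun alt_word :: "'a \<Rightarrow> 'a \<Rightarrow> nat \<Rightarrow> 'a list" where
  "alt_word a b 0 = []"
| "alt_word a b (Suc n) = alt_word b a n @ [b]"

lemma length_alt_word [simp]: "length (alt_word a b n) = n"
  by (induction n arbitrary: a b) auto

lemma set_alt_word: "set (alt_word a b n) \<subseteq> {a, b}"
  by (induction n arbitrary: a b) auto

lemma alt_word_Suc_Cons: "alt_word a b (Suc n) = (if even n then b else a) # alt_word a b n"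
  by (induction n arbitrary: a b) auto

lemma alt_word_add:
  "alt_word a b (k + j) = (if even j then alt_word a b k else alt_word b a k) @ alt_word a b j"
  by (induction j arbitrary: a b) auto

lemma alt_word_if_no_square:
  assumes "set ws \<subseteq> {a, b}" "a \<noteq> b" "\<nexists>xs ys c. ws = xs @ [c, c] @ ys" "ws = [] \<or> last ws = b"
  shows "ws = alt_word a b (length ws)"
  using assms
proof (induction ws arbitrary: a b rule: rev_induct)
  case (snoc y xs)
  have yb: "y = b" using snoc.prems(4) by simp
  have no_square: "\<nexists>as bs c. xs = as @ [c, c] @ bs"
    using snoc.prems(3) by (metis append.assoc append_Cons)
  have "xs = [] \<or> last xs = a"
  proof (cases xs rule: rev_cases)
    case (snoc zs z)
    have "z \<noteq> b"
    proof
      assume "z = b"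
      then have "xs @ [y] = zs @ [b, b] @ []" using snoc yb by simp
      then show False using snoc.prems(3) by blast
    qed
    then show ?thesis using snoc snoc.prems(1) by auto
  qed simp
  then have "xs = alt_word b a (length xs)"
    using snoc.IH[of b a] snoc.prems(1,2) no_square by auto
  then show ?case using yb by simp
qed simp

locale coxeter_system =
  fixes S :: "'a set" and m :: "'a \<Rightarrow> 'a \<Rightarrow> enat"
  assumes coxeter_matrix: "coxeter_matrix S m"
begin

abbreviation B :: "('a \<Rightarrow> real) \<Rightarrow> ('a \<Rightarrow> real) \<Rightarrow> real" where
  "B \<equiv> bform S m"

definition fin_supp :: "('a \<Rightarrow> real) \<Rightarrow> bool" where
  "fin_supp v \<longleftrightarrow> finite (vsupp S v)"

definition lin_comb :: "real \<Rightarrow> ('a \<Rightarrow> real) \<Rightarrow> real \<Rightarrow> ('a \<Rightarrow> real) \<Rightarrow> 'a \<Rightarrow> real" where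
  "lin_comb a u b v = (\<lambda>t. a * u t + b * v t)"

definition reflection :: "('a \<Rightarrow> real) \<Rightarrow> ('a \<Rightarrow> real) \<Rightarrow> 'a \<Rightarrow> real" where
  "reflection g v = (\<lambda>t. v t - 2 * B g v * g t)"

definition coxcos :: "'a \<Rightarrow> 'a \<Rightarrow> real" where
  "coxcos a b = - bcoef m a b"

lemma bcoef_diag: "s \<in> S \<Longrightarrow> bcoef m s s = 1"
  using coxeter_matrix by (simp add: coxeter_matrix_def bcoef_def one_enat_def)

lemma coxcos_sym: "s \<in> S \<Longrightarrow> t \<in> S \<Longrightarrow> coxcos s t = coxcos t s"
  using coxeter_matrix by (simp add: coxeter_matrix_def coxcos_def bcoef_def)

lemma vsupp_simple_root: "s \<in> S \<Longrightarrow> vsupp S (simple_root s) = {s}"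
  by (auto simp: vsupp_def simple_root_def)

lemma vsupp_uminus: "vsupp S (- v) = vsupp S v"
  by (auto simp: vsupp_def)

lemma fin_supp_simple_root: "s \<in> S \<Longrightarrow> fin_supp (simple_root s)"
  by (simp add: fin_supp_def vsupp_simple_root)

lemma fin_supp_lin_comb:
  assumes "fin_supp u" "fin_supp v"
  shows "fin_supp (lin_comb a u b v)"
proof -
  have "vsupp S (lin_comb a u b v) \<subseteq> vsupp S u \<union> vsupp S v"
    by (auto simp: vsupp_def lin_comb_def)
  then show ?thesis using assms unfolding fin_supp_def by (meson finite_UnI finite_subset)
qed

lemma lin_comb_minus_one: "lin_comb (-1) u 0 v = - u"
  by (simp add: lin_comb_def fun_eq_iff)

lemma bform_not_fin_supp: "\<not> fin_supp v \<Longrightarrow> B u v = 0"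
  by (simp add: bform_def fin_supp_def)

lemma bform_sym: "B u v = B v u"
  unfolding bform_def using coxeter_matrix
  by (subst sum.swap) (auto intro!: sum.cong simp: vsupp_def coxeter_matrix_def bcoef_def)

lemma bform_expand:
  assumes "finite A" "vsupp S u \<subseteq> A" "A \<subseteq> S" "finite C" "vsupp S v \<subseteq> C" "C \<subseteq> S"
  shows "B u v = (\<Sum>s\<in>A. \<Sum>t\<in>C. u s * v t * bcoef m s t)"
proof -
  have "B u v = (\<Sum>s\<in>vsupp S u. \<Sum>t\<in>C. u s * v t * bcoef m s t)"
    unfolding bform_def
    by (intro sum.cong refl sum.mono_neutral_left) (use assms in \<open>auto simp: vsupp_def intro: finite_subset\<close>)
  also have "\<dots> = (\<Sum>s\<in>A. \<Sum>t\<in>C. u s * v t * bcoef m s t)"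
    by (intro sum.mono_neutral_left) (use assms in \<open>auto simp: vsupp_def\<close>)
  finally show ?thesis .
qed

lemma bform_simple_root_left:
  assumes "s \<in> S" "finite C" "vsupp S v \<subseteq> C" "C \<subseteq> S"
  shows "B (simple_root s) v = (\<Sum>t\<in>C. v t * bcoef m s t)"
  using bform_expand[of "{s}" "simple_root s" C v] assms
  by (simp add: vsupp_simple_root) (simp add: simple_root_def)

lemma bform_lin_comb_left:
  assumes "fin_supp u" "fin_supp v"
  shows "B (lin_comb a u b v) z = a * B u z + b * B v z"
proof (cases "fin_supp z")
  case True
  let ?A = "vsupp S u \<union> vsupp S v" and ?C = "vsupp S z"
  have A: "finite ?A" "?A \<subseteq> S" and C: "finite ?C" "?C \<subseteq> S"
    using assms True by (auto simp: fin_supp_def vsupp_def)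
  have "vsupp S (lin_comb a u b v) \<subseteq> ?A" by (auto simp: vsupp_def lin_comb_def)
  then show ?thesis
    using bform_expand[OF A(1) _ A(2) C(1) subset_refl C(2)]
    by (simp add: lin_comb_def sum_distrib_left sum.distrib algebra_simps)
qed (simp add: bform_not_fin_supp)

lemma bform_lin_comb_right:
  "fin_supp u \<Longrightarrow> fin_supp v \<Longrightarrow> B z (lin_comb a u b v) = a * B z u + b * B z v"
  using bform_lin_comb_left by (simp add: bform_sym)

lemma bform_simple_roots: "s \<in> S \<Longrightarrow> t \<in> S \<Longrightarrow> B (simple_root s) (simple_root t) = - coxcos s t"
  by (simp add: bform_simple_root_left[of s "{t}"] vsupp_simple_root coxcos_def)
    (simp add: simple_root_def)

lemma bform_simple_root_self: "s \<in> S \<Longrightarrow> B (simple_root s) (simple_root s) = 1"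
  by (simp add: bform_simple_roots coxcos_def bcoef_diag)

lemma bform_uminus_right: "B u (- v) = - B u v"
  by (simp add: bform_def vsupp_uminus sum_negf)

lemma bform_uminus_left: "B (- u) v = - B u v"
  using bform_uminus_right bform_sym by metis

lemma reflection_lin_comb: "reflection g v = lin_comb 1 v (- 2 * B g v) g"
  by (simp add: reflection_def lin_comb_def fun_eq_iff)

lemma sref_eq_reflection: "sref S m s = reflection (simple_root s)"
  by (simp add: sref_def reflection_def fun_eq_iff)

lemma reflection_uminus: "reflection (- g) = reflection g"
  by (simp add: reflection_def bform_uminus_left fun_eq_iff)

lemma reflection_orthogonal: "B g v = 0 \<Longrightarrow> reflection g v = v"
  by (simp add: reflection_def)

lemma reflection_self:
  assumes "B g g = 1"
  shows "reflection g g = - g"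
  using assms by (simp add: reflection_def fun_eq_iff)

lemma reflection_involutive:
  assumes "fin_supp g" "B g g = 1"
  shows "reflection g (reflection g v) = v"
proof (cases "fin_supp v")
  case True
  have "B g (reflection g v) = - B g v"
    unfolding reflection_lin_comb using assms by (simp add: bform_lin_comb_right[OF True assms(1)])
  then show ?thesis by (simp add: reflection_def fun_eq_iff)
qed (simp add: reflection_def bform_not_fin_supp)

text \<open>Vectors are all functions on the index type, and bform vanishes on those of infinite support.
  The generators of W fix these, so isometries are only required to be linear and form-preserving on
  finitely supported vectors.\<close>

definition isometry :: "(('a \<Rightarrow> real) \<Rightarrow> 'a \<Rightarrow> real) \<Rightarrow> bool" where
  "isometry f \<longleftrightarrow> bij f \<and> (\<forall>v. \<not> fin_supp v \<longrightarrow> f v = v) \<and> (\<forall>v. fin_supp v \<longrightarrow> fin_supp (f v)) \<and>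
     (\<forall>a u b v. fin_supp u \<longrightarrow> fin_supp v \<longrightarrow> f (lin_comb a u b v) = lin_comb a (f u) b (f v)) \<and>
     (\<forall>u v. fin_supp u \<longrightarrow> fin_supp v \<longrightarrow> B (f u) (f v) = B u v)"

lemma isometry_bij: "isometry f \<Longrightarrow> bij f"
  and isometry_fin_supp: "isometry f \<Longrightarrow> fin_supp v \<Longrightarrow> fin_supp (f v)"
  and isometry_lin_comb: "isometry f \<Longrightarrow> fin_supp u \<Longrightarrow> fin_supp v \<Longrightarrow>
     f (lin_comb a u b v) = lin_comb a (f u) b (f v)"
  and isometry_bform: "isometry f \<Longrightarrow> fin_supp u \<Longrightarrow> fin_supp v \<Longrightarrow> B (f u) (f v) = B u v"
  by (simp_all add: isometry_def)

lemma isometry_id: "isometry id"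
  by (simp add: isometry_def)

lemma isometry_comp: "isometry f \<Longrightarrow> isometry g \<Longrightarrow> isometry (f \<circ> g)"
  unfolding isometry_def by (simp add: bij_comp)

lemma isometry_inv:
  assumes "isometry f"
  shows "isometry (inv f)"
proof -
  have bij: "bij f" and fix_inf: "\<And>v. \<not> fin_supp v \<Longrightarrow> f v = v"
    and fin: "\<And>v. fin_supp v \<Longrightarrow> fin_supp (f v)"
    and lin: "\<And>a u b v. fin_supp u \<Longrightarrow> fin_supp v \<Longrightarrow> f (lin_comb a u b v) = lin_comb a (f u) b (f v)"
    and isom: "\<And>u v. fin_supp u \<Longrightarrow> fin_supp v \<Longrightarrow> B (f u) (f v) = B u v"
    using assms unfolding isometry_def by blast+
  have f_inv: "f (inv f v) = v" and inv_f: "inv f (f v) = v" for v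
    using bij by (simp_all add: bij_is_surj surj_f_inv_f bij_is_inj)
  have fix_inf_inv: "inv f v = v" if "\<not> fin_supp v" for v
    using fix_inf[OF that] inv_f by metis
  have fin_inv: "fin_supp (inv f v)" if "fin_supp v" for v
    using fix_inf f_inv that by metis
  have "inv f (lin_comb a u b v) = lin_comb a (inv f u) b (inv f v)" if "fin_supp u" "fin_supp v" for a u b v
    using lin[OF fin_inv[OF that(1)] fin_inv[OF that(2)]] f_inv inv_f by metis
  moreover have "B (inv f u) (inv f v) = B u v" if "fin_supp u" "fin_supp v" for u v
    using isom[OF fin_inv[OF that(1)] fin_inv[OF that(2)]] f_inv by simp
  ultimately show ?thesis
    using bij fix_inf_inv fin_inv by (simp add: isometry_def bij_imp_bij_inv)
qed

lemma isometry_uminus: "isometry f \<Longrightarrow> fin_supp v \<Longrightarrow> f (- v) = - f v"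
  unfolding isometry_def by (metis lin_comb_minus_one)

lemma isometry_reflection:
  assumes "fin_supp g" "B g g = 1"
  shows "isometry (reflection g)"
proof -
  have "bij (reflection g)"
    by (rule involuntory_imp_bij) (simp add: reflection_involutive assms)
  moreover have "reflection g v = v" if "\<not> fin_supp v" for v
    using that by (simp add: reflection_def bform_not_fin_supp)
  moreover have "fin_supp (reflection g v)" if "fin_supp v" for v
    unfolding reflection_lin_comb by (rule fin_supp_lin_comb[OF that assms(1)])
  moreover have "reflection g (lin_comb a u b v) = lin_comb a (reflection g u) b (reflection g v)"
    if "fin_supp u" "fin_supp v" for a u b v
  proof -
    have "B g (lin_comb a u b v) = a * B g u + b * B g v" by (rule bform_lin_comb_right[OF that])
    then show ?thesis unfolding reflection_def by (simp add: lin_comb_def fun_eq_iff algebra_simps)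
  qed
  moreover have "B (reflection g u) (reflection g v) = B u v" if "fin_supp u" "fin_supp v" for u v
  proof -
    have "B (reflection g u) (reflection g v)
        = B u v - 2 * B g v * B u g - 2 * B g u * (B g v - 2 * B g v * B g g)"
      unfolding reflection_lin_comb using that assms
      by (simp add: bform_lin_comb_left bform_lin_comb_right fin_supp_lin_comb algebra_simps)
    then show ?thesis using assms by (simp add: bform_sym[of u g] algebra_simps)
  qed
  ultimately show ?thesis unfolding isometry_def by blast
qed

lemma reflection_conj:
  assumes "isometry w" "fin_supp g"
  shows "w \<circ> reflection g \<circ> inv w = reflection (w g)"
proof
  fix v
  have inv_w: "isometry (inv w)" using isometry_inv[OF assms(1)] .
  show "(w \<circ> reflection g \<circ> inv w) v = reflection (w g) v"
  proof (cases "fin_supp v")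
    case False
    then show ?thesis
      using assms(1) inv_w by (simp add: isometry_def reflection_def bform_not_fin_supp)
  next
    case True
    define u where "u = inv w v"
    have u: "fin_supp u" "w u = v"
      using inv_w True assms(1) by (simp_all add: isometry_def u_def bij_is_surj surj_f_inv_f)
    have "(w \<circ> reflection g \<circ> inv w) v = w (lin_comb 1 u (- 2 * B g u) g)"
      by (simp add: reflection_lin_comb u_def)
    also have "\<dots> = lin_comb 1 v (- 2 * B (w g) v) (w g)"
      using assms u by (metis isometry_def)
    finally show ?thesis by (simp add: reflection_lin_comb)
  qed
qed

lemma isometry_sref: "s \<in> S \<Longrightarrow> isometry (sref S m s)"
  unfolding sref_eq_reflection
  by (rule isometry_reflection[OF fin_supp_simple_root bform_simple_root_self])

lemma sref_simple_root: "s \<in> S \<Longrightarrow> sref S m s (simple_root s) = - simple_root s"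
  unfolding sref_eq_reflection by (rule reflection_self[OF bform_simple_root_self])

lemma sref_sref: "s \<in> S \<Longrightarrow> sref S m s \<circ> sref S m s = id"
  unfolding sref_eq_reflection
  by (simp add: fun_eq_iff reflection_involutive fin_supp_simple_root bform_simple_root_self)

lemma inv_sref: "s \<in> S \<Longrightarrow> inv (sref S m s) = sref S m s"
  using sref_sref inv_unique_comp by metis

lemma sref_apply_other: "t \<noteq> s \<Longrightarrow> sref S m s v t = v t"
  by (simp add: sref_def simple_root_def)

primrec word_prod :: "'a list \<Rightarrow> ('a \<Rightarrow> real) \<Rightarrow> 'a \<Rightarrow> real" where
  "word_prod [] = id"
| "word_prod (s # ws) = sref S m s \<circ> word_prod ws"

lemma word_prod_append: "word_prod (xs @ ys) = word_prod xs \<circ> word_prod ys"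
  by (induction xs) auto

lemma word_prod_snoc_sref:
  "s \<in> S \<Longrightarrow> word_prod (ws @ [s]) \<circ> sref S m s = word_prod ws"
  by (simp add: word_prod_append comp_assoc sref_sref)

lemma isometry_word_prod: "set ws \<subseteq> S \<Longrightarrow> isometry (word_prod ws)"
  by (induction ws) (auto intro: isometry_id isometry_comp isometry_sref)

lemma word_prod_apply_outside: "t \<notin> set ws \<Longrightarrow> word_prod ws v t = v t"
  by (induction ws arbitrary: v) (auto simp: sref_apply_other)

lemma word_prod_fixes_orthogonal:
  assumes "set ws \<subseteq> {a, b}" "B (simple_root a) v = 0" "B (simple_root b) v = 0"
  shows "word_prod ws v = v"
  using assms(1) by (induction ws) (use assms(2,3) in \<open>auto simp: sref_def\<close>)

lemma word_prod_rev:
  assumes "set ws \<subseteq> S"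
  shows "word_prod (rev ws) = inv (word_prod ws)"
proof -
  have *: "word_prod ws \<circ> word_prod (rev ws) = id" if "set ws \<subseteq> S" for ws
    using that
  proof (induction ws)
    case (Cons s ws)
    have "word_prod (s # ws) \<circ> word_prod (rev (s # ws))
        = sref S m s \<circ> (word_prod ws \<circ> word_prod (rev ws)) \<circ> sref S m s"
      by (simp add: word_prod_append comp_assoc)
    also have "\<dots> = id"
      using Cons sref_sref by (metis comp_id insert_subset list.set(2))
    finally show ?case .
  qed simp
  show ?thesis
    using *[of ws] *[of "rev ws"] assms by (intro inv_unique_comp[symmetric]) auto
qed

definition word_group :: "'a set \<Rightarrow> (('a \<Rightarrow> real) \<Rightarrow> 'a \<Rightarrow> real) set" where
  "word_group A = {word_prod ws | ws. set ws \<subseteq> A}"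

lemma word_prod_in_word_group: "set ws \<subseteq> A \<Longrightarrow> word_prod ws \<in> word_group A"
  by (auto simp: word_group_def)

lemma word_group_id: "id \<in> word_group A"
  using word_prod_in_word_group[of "[]"] by simp

lemma word_group_sref: "s \<in> A \<Longrightarrow> sref S m s \<in> word_group A"
  using word_prod_in_word_group[of "[s]"] by simp

lemma word_group_comp:
  assumes "f \<in> word_group A" "g \<in> word_group A"
  shows "f \<circ> g \<in> word_group A"
proof -
  obtain xs ys where "set xs \<subseteq> A" "f = word_prod xs" "set ys \<subseteq> A" "g = word_prod ys"
    using assms by (auto simp: word_group_def)
  then show ?thesis using word_prod_in_word_group[of "xs @ ys" A] by (simp add: word_prod_append)
qed

lemma word_group_inv:
  assumes "f \<in> word_group A" "A \<subseteq> S"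
  shows "inv f \<in> word_group A"
proof -
  obtain ws where "set ws \<subseteq> A" "f = word_prod ws"
    using assms by (auto simp: word_group_def)
  then show ?thesis using word_prod_in_word_group[of "rev ws" A] assms(2) by (simp add: word_prod_rev)
qed

lemma word_group_mono: "A \<subseteq> C \<Longrightarrow> word_group A \<subseteq> word_group C"
  unfolding word_group_def by auto

lemma isometry_word_group: "w \<in> word_group S \<Longrightarrow> isometry w"
  unfolding word_group_def using isometry_word_prod by blast

lemma gen_group_subset_word_group: "A \<subseteq> word_group C \<Longrightarrow> C \<subseteq> S \<Longrightarrow> gen_group A \<subseteq> word_group C"
  by (rule gen_group_subset) (auto intro: word_group_id word_group_comp word_group_inv)

lemma coxW_eq_word_group: "coxW S m = word_group S"
proof
  show "coxW S m \<subseteq> word_group S"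
    unfolding coxW_def by (rule gen_group_subset_word_group) (auto intro: word_group_sref)
  show "word_group S \<subseteq> coxW S m"
  proof
    fix w assume "w \<in> word_group S"
    then obtain ws where "set ws \<subseteq> S" "w = word_prod ws" by (auto simp: word_group_def)
    then show "w \<in> coxW S m"
      by (induction ws arbitrary: w) (auto simp: coxW_def intro: gen_group.intros)
  qed
qed

definition word_length :: "'a set \<Rightarrow> (('a \<Rightarrow> real) \<Rightarrow> 'a \<Rightarrow> real) \<Rightarrow> nat" where
  "word_length A w = (LEAST n. \<exists>ws. set ws \<subseteq> A \<and> length ws = n \<and> word_prod ws = w)"

lemma word_length_le: "set ws \<subseteq> A \<Longrightarrow> word_length A (word_prod ws) \<le> length ws"
  unfolding word_length_def by (rule Least_le) blast

lemma reduced_word_exists: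
  "w \<in> word_group A \<Longrightarrow> \<exists>ws. set ws \<subseteq> A \<and> length ws = word_length A w \<and> word_prod ws = w"
  unfolding word_length_def word_group_def by (rule LeastI_ex) blast

lemma word_length_mono: "w \<in> word_group I \<Longrightarrow> I \<subseteq> A \<Longrightarrow> word_length A w \<le> word_length I w"
  using reduced_word_exists[of w I] word_length_le[of _ A] by force

lemma word_length_comp:
  assumes "f \<in> word_group A" "g \<in> word_group A"
  shows "word_length A (f \<circ> g) \<le> word_length A f + word_length A g"
proof -
  obtain xs ys where "set xs \<subseteq> A" "length xs = word_length A f" "word_prod xs = f"
      "set ys \<subseteq> A" "length ys = word_length A g" "word_prod ys = g"
    using reduced_word_exists assms by metis
  then show ?thesis using word_length_le[of "xs @ ys" A] by (simp add: word_prod_append)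
qed

lemma word_length_sref: "s \<in> A \<Longrightarrow> word_length A (sref S m s) \<le> 1"
  using word_length_le[of "[s]" A] by simp

lemma word_length_eq_0: "w \<in> word_group A \<Longrightarrow> word_length A w = 0 \<Longrightarrow> w = id"
  using reduced_word_exists[of w A] by auto

lemma word_length_inv: "w \<in> word_group S \<Longrightarrow> word_length S (inv w) = word_length S w"
proof -
  have le: "word_length S (inv w) \<le> word_length S w" if w: "w \<in> word_group S" for w
  proof -
    obtain ws where "set ws \<subseteq> S" "length ws = word_length S w" "word_prod ws = w"
      using reduced_word_exists[OF w] by blast
    then show ?thesis using word_length_le[of "rev ws" S] by (simp add: word_prod_rev)
  qed
  assume w: "w \<in> word_group S"
  have "inv (inv w) = w"
    using isometry_bij[OF isometry_word_group[OF w]] by (simp add: inv_inv_eq)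
  then show ?thesis using le[OF w] le[OF word_group_inv[OF w subset_refl]] by simp
qed

lemma sref_lin_comb_left:
  assumes "a \<in> S" "b \<in> S" "a \<noteq> b"
  shows "sref S m a (lin_comb p (simple_root a) q (simple_root b))
       = lin_comb (2 * coxcos a b * q - p) (simple_root a) q (simple_root b)"
proof -
  have "B (simple_root a) (lin_comb p (simple_root a) q (simple_root b)) = p - coxcos a b * q"
    using assms by (simp add: bform_lin_comb_right fin_supp_simple_root bform_simple_root_self bform_simple_roots)
  then show ?thesis using assms by (simp add: sref_def lin_comb_def fun_eq_iff simple_root_def algebra_simps)
qed

lemma sref_lin_comb_right:
  assumes "a \<in> S" "b \<in> S" "a \<noteq> b"
  shows "sref S m b (lin_comb p (simple_root a) q (simple_root b))
       = lin_comb p (simple_root a) (2 * coxcos a b * p - q) (simple_root b)"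
proof -
  have "B (simple_root b) (lin_comb p (simple_root a) q (simple_root b)) = q - coxcos a b * p"
    using assms
    by (simp add: bform_lin_comb_right fin_supp_simple_root bform_simple_root_self bform_simple_roots coxcos_sym)
  then show ?thesis using assms by (simp add: sref_def lin_comb_def fun_eq_iff simple_root_def algebra_simps)
qed

lemma set_alt_word_subset: "a \<in> S \<Longrightarrow> b \<in> S \<Longrightarrow> set (alt_word a b n) \<subseteq> S"
  using set_alt_word[of a b n] by auto

lemma word_prod_alt_word_simple_root:
  assumes "a \<in> S" "b \<in> S" "a \<noteq> b"
  shows "word_prod (alt_word a b j) (simple_root a) =
    (if even j then lin_comb (cheb_U (coxcos a b) (Suc j)) (simple_root a) (cheb_U (coxcos a b) j) (simple_root b)
     else lin_comb (cheb_U (coxcos a b) j) (simple_root a) (cheb_U (coxcos a b) (Suc j)) (simple_root b))"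
proof (induction j)
  case (Suc j)
  then show ?case using assms
    by (cases "even j") (simp_all add: alt_word_Suc_Cons sref_lin_comb_left sref_lin_comb_right del: alt_word.simps(2))
qed (simp add: lin_comb_def)

lemma word_prod_alt_word_last_simple_root:
  assumes "a \<in> S" "b \<in> S"
  shows "word_prod (alt_word a b (Suc j)) (simple_root b) = - word_prod (alt_word b a j) (simple_root b)"
proof -
  have "set (alt_word b a j) \<subseteq> S" using set_alt_word[of b a j] assms by auto
  then show ?thesis
    using isometry_uminus[OF isometry_word_prod fin_supp_simple_root[OF assms(2)]]
    by (simp add: word_prod_append sref_simple_root assms(2))
qed

lemma word_prod_alt_word_2k:
  assumes "a \<in> S" "b \<in> S" "a \<noteq> b" "k \<ge> 1" "coxcos a b = cos (pi / real (2 * k))"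
  shows "word_prod (alt_word a b (2 * k)) (simple_root a) = - simple_root a"
    and "word_prod (alt_word a b (2 * k)) (simple_root b) = - simple_root b"
proof -
  show "word_prod (alt_word a b (2 * k)) (simple_root a) = - simple_root a"
    using word_prod_alt_word_simple_root[OF assms(1-3), of "2 * k"] assms(5)
      cheb_U_cos_pi_div_even_2k[OF assms(4)] cheb_U_cos_pi_div_even_2k_plus_1[OF assms(4)]
    by (simp add: lin_comb_def fun_eq_iff)
  have "Suc (2 * k - 1) = 2 * k" "odd (2 * k - 1)" using assms(4) by auto
  moreover have "coxcos b a = cos (pi / real (2 * k))" using assms(1,2,5) coxcos_sym by simp
  ultimately have "word_prod (alt_word b a (2 * k - 1)) (simple_root b) = simple_root b"
    using word_prod_alt_word_simple_root[OF assms(2,1) assms(3)[symmetric], of "2 * k - 1"]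
      cheb_U_cos_pi_div_even_2k[OF assms(4)] cheb_U_cos_pi_div_even_2k_minus_1[OF assms(4)]
    by (simp add: lin_comb_def fun_eq_iff)
  then show "word_prod (alt_word a b (2 * k)) (simple_root b) = - simple_root b"
    using word_prod_alt_word_last_simple_root[OF assms(1,2), of "2 * k - 1"] \<open>Suc (2 * k - 1) = 2 * k\<close>
    by simp
qed

lemma orthogonal_decomposition_plane:
  assumes "a \<in> S" "b \<in> S" "a \<noteq> b" "(coxcos a b)\<^sup>2 \<noteq> 1" "fin_supp v"
  obtains c1 c2 v' where "fin_supp v'" "B (simple_root a) v' = 0" "B (simple_root b) v' = 0"
    "v = lin_comb 1 (lin_comb c1 (simple_root a) c2 (simple_root b)) 1 v'"
proof -
  define c where "c = coxcos a b"
  define p where "p = B (simple_root a) v"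
  define q where "q = B (simple_root b) v"
  define D where "D = 1 - c\<^sup>2"
  have D: "D \<noteq> 0" using assms(4) by (simp add: D_def c_def)
  define c1 where "c1 = (p + c * q) / D"
  define c2 where "c2 = (q + c * p) / D"
  define w where "w = lin_comb c1 (simple_root a) c2 (simple_root b)"
  define v' where "v' = lin_comb 1 v (-1) w"
  have fin_w: "fin_supp w" unfolding w_def using assms by (intro fin_supp_lin_comb fin_supp_simple_root)
  have "B (simple_root a) w = c1 - c * c2" "B (simple_root b) w = c2 - c * c1"
    unfolding w_def using assms
    by (simp_all add: bform_lin_comb_right fin_supp_simple_root bform_simple_root_self
        bform_simple_roots coxcos_sym c_def)
  then have "B (simple_root a) v' = p - (c1 - c * c2)" "B (simple_root b) v' = q - (c2 - c * c1)"
    unfolding v'_def using assms(5) fin_w by (simp_all add: bform_lin_comb_right p_def q_def)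
  moreover have "(p + c * q) - c * (q + c * p) = p * D" "(q + c * p) - c * (p + c * q) = q * D"
    by (simp_all add: D_def algebra_simps power2_eq_square)
  then have "c1 - c * c2 = p" "c2 - c * c1 = q"
    using D by (simp_all add: c1_def c2_def flip: diff_divide_distrib)
  ultimately have "B (simple_root a) v' = 0" "B (simple_root b) v' = 0" by simp_all
  moreover have "v = lin_comb 1 w 1 v'" by (simp add: v'_def lin_comb_def fun_eq_iff)
  moreover have "fin_supp v'" unfolding v'_def by (rule fin_supp_lin_comb[OF assms(5) fin_w])
  ultimately show ?thesis using that unfolding w_def by blast
qed

lemma isometry_eqI_plane:
  assumes "a \<in> S" "b \<in> S" "a \<noteq> b" "(coxcos a b)\<^sup>2 \<noteq> 1" "isometry f" "isometry g"
    and "\<And>v. fin_supp v \<Longrightarrow> B (simple_root a) v = 0 \<Longrightarrow> B (simple_root b) v = 0 \<Longrightarrow> f v = g v"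
    and "f (simple_root a) = g (simple_root a)" "f (simple_root b) = g (simple_root b)"
  shows "f = g"
proof
  fix v
  show "f v = g v"
  proof (cases "fin_supp v")
    case True
    then obtain c1 c2 v' where v': "fin_supp v'" "B (simple_root a) v' = 0" "B (simple_root b) v' = 0"
      "v = lin_comb 1 (lin_comb c1 (simple_root a) c2 (simple_root b)) 1 v'"
      using orthogonal_decomposition_plane[OF assms(1-4)] by blast
    have "fin_supp (lin_comb c1 (simple_root a) c2 (simple_root b))"
      using assms by (intro fin_supp_lin_comb fin_supp_simple_root)
    then show ?thesis
      using assms(5-9) v' fin_supp_simple_root[OF assms(1)] fin_supp_simple_root[OF assms(2)]
      unfolding isometry_def by simp
  qed (use assms(5,6) in \<open>simp add: isometry_def\<close>)
qed

lemma braid_relation: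
  assumes "a \<in> S" "b \<in> S" "a \<noteq> b" "k \<ge> 1" "coxcos a b = cos (pi / real (2 * k))"
  shows "word_prod (alt_word a b (2 * k)) = word_prod (alt_word b a (2 * k))"
proof (rule isometry_eqI_plane[OF assms(1-3)])
  have "sin (pi / real (2 * k)) > 0" using sin_pi_div_even_pos[OF assms(4)] .
  then show "(coxcos a b)\<^sup>2 \<noteq> 1" using assms(5) by (simp add: cos_squared_eq)
  show "isometry (word_prod (alt_word a b (2 * k)))" "isometry (word_prod (alt_word b a (2 * k)))"
    using set_alt_word_subset assms(1,2) by (auto intro!: isometry_word_prod)
  show "word_prod (alt_word a b (2 * k)) v = word_prod (alt_word b a (2 * k)) v"
    if "B (simple_root a) v = 0" "B (simple_root b) v = 0" for v
  proof -
    have "set (alt_word b a (2 * k)) \<subseteq> {a, b}" using set_alt_word[of b a] by auto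
    then show ?thesis
      using word_prod_fixes_orthogonal[OF set_alt_word that] word_prod_fixes_orthogonal[OF _ that] by metis
  qed
  have "coxcos b a = cos (pi / real (2 * k))" using assms coxcos_sym by simp
  then show "word_prod (alt_word a b (2 * k)) (simple_root a) = word_prod (alt_word b a (2 * k)) (simple_root a)"
    and "word_prod (alt_word a b (2 * k)) (simple_root b) = word_prod (alt_word b a (2 * k)) (simple_root b)"
    using word_prod_alt_word_2k[OF assms] word_prod_alt_word_2k[OF assms(2,1) _ assms(4)] assms(3) by simp_all
qed

lemma reduced_word_no_square:
  assumes "set ws \<subseteq> A" "A \<subseteq> S" "length ws = word_length A (word_prod ws)"
  shows "\<nexists>xs ys c. ws = xs @ [c, c] @ ys"
proof
  assume "\<exists>xs ys c. ws = xs @ [c, c] @ ys"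
  then obtain xs ys c where ws: "ws = xs @ [c, c] @ ys" by blast
  then have "word_prod ws = word_prod xs \<circ> (sref S m c \<circ> sref S m c) \<circ> word_prod ys"
    by (simp add: word_prod_append comp_assoc)
  then have "word_prod ws = word_prod (xs @ ys)"
    using ws assms(1,2) sref_sref[of c] by (auto simp: word_prod_append)
  then show False
    using word_length_le[of "xs @ ys" A] ws assms(1,3) by simp
qed

lemma parabolic_factorization:
  assumes "I \<subseteq> S" "v0 \<in> word_group S" "u0 \<in> word_group I" "w = v0 \<circ> u0"
    and "word_length S v0 + word_length I u0 \<le> word_length S w"
  obtains v u where "v \<in> word_group S" "u \<in> word_group I" "w = v \<circ> u"
    "word_length S v + word_length I u \<le> word_length S w" "word_length S v \<le> word_length S v0"
    "\<And>r. r \<in> I \<Longrightarrow> word_length S (v \<circ> sref S m r) \<ge> word_length S v"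
proof -
  define P where "P v \<longleftrightarrow> v \<in> word_group S \<and>
    (\<exists>u\<in>word_group I. w = v \<circ> u \<and> word_length S v + word_length I u \<le> word_length S w)" for v
  have "P v0" using assms unfolding P_def by blast
  then obtain v where "P v" and v_min: "\<And>y. P y \<Longrightarrow> word_length S v \<le> word_length S y"
    using ex_has_least_nat[of P v0 "word_length S"] by blast
  then obtain u where v: "v \<in> word_group S" and u: "u \<in> word_group I" "w = v \<circ> u"
      "word_length S v + word_length I u \<le> word_length S w"
    unfolding P_def by blast
  have "word_length S (v \<circ> sref S m r) \<ge> word_length S v" if r: "r \<in> I" for r
  proof (rule ccontr)
    assume "\<not> word_length S (v \<circ> sref S m r) \<ge> word_length S v"
    moreover have "word_length I (sref S m r \<circ> u) \<le> word_length I u + 1"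
      using word_length_comp[OF word_group_sref[OF r] u(1)] word_length_sref[OF r] by linarith
    moreover have "w = (v \<circ> sref S m r) \<circ> (sref S m r \<circ> u)"
      using u(2) sref_sref r assms(1) by (metis comp_assoc comp_id subsetD)
    ultimately have "P (v \<circ> sref S m r)"
      unfolding P_def using v u r assms(1)
      by (intro conjI word_group_comp word_group_sref bexI[of _ "sref S m r \<circ> u"]) auto
    then show False using v_min \<open>\<not> word_length S (v \<circ> sref S m r) \<ge> word_length S v\<close> by fastforce
  qed
  then show ?thesis using that v u v_min[OF \<open>P v0\<close>] by blast
qed

lemma parabolic_factor_no_descent:
  assumes "I \<subseteq> S" "v \<in> word_group S" "u \<in> word_group I" "w = v \<circ> u"
    and "word_length S v + word_length I u \<le> word_length S w"
    and "s \<in> I" "word_length S (w \<circ> sref S m s) \<ge> word_length S w"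
  shows "word_length I (u \<circ> sref S m s) \<ge> word_length I u"
proof (rule ccontr)
  assume "\<not> word_length I (u \<circ> sref S m s) \<ge> word_length I u"
  moreover have us: "u \<circ> sref S m s \<in> word_group I"
    using assms(3,6) by (simp add: word_group_comp word_group_sref)
  moreover have "word_length S (w \<circ> sref S m s) \<le> word_length S v + word_length S (u \<circ> sref S m s)"
    using word_length_comp[OF assms(2)] us word_group_mono[OF assms(1)] assms(4) by (auto simp: comp_assoc)
  moreover have "word_length S (u \<circ> sref S m s) \<le> word_length I (u \<circ> sref S m s)"
    using word_length_mono[OF us assms(1)] .
  ultimately show False using assms(5,7) by linarith
qed

lemma mem_roots_iff: "g \<in> roots S m \<longleftrightarrow> (\<exists>w s. w \<in> word_group S \<and> s \<in> S \<and> g = w (simple_root s))"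
  by (auto simp: roots_def coxW_eq_word_group)

lemma rootsE:
  assumes "g \<in> roots S m"
  obtains w s where "w \<in> word_group S" "s \<in> S" "g = w (simple_root s)"
  using assms unfolding mem_roots_iff by blast

lemma fin_supp_root: "g \<in> roots S m \<Longrightarrow> fin_supp g"
  by (erule rootsE) (simp add: isometry_fin_supp isometry_word_group fin_supp_simple_root)

lemma bform_root_self: "g \<in> roots S m \<Longrightarrow> B g g = 1"
  by (erule rootsE) (simp add: isometry_bform isometry_word_group fin_supp_simple_root bform_simple_root_self)

lemma root_apply_outside:
  assumes "g \<in> roots S m" "t \<notin> S"
  shows "g t = 0"
proof -
  obtain w s where "w \<in> word_group S" "s \<in> S" "g = w (simple_root s)"
    using assms(1) by (rule rootsE)
  moreover from this obtain ws where "set ws \<subseteq> S" "w = word_prod ws"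
    by (auto simp: word_group_def)
  moreover from this have "t \<notin> set ws" using assms(2) by blast
  ultimately show ?thesis
    using assms(2) word_prod_apply_outside[of t ws] by (auto simp: simple_root_def)
qed

lemma sref_root_in_roots: "g \<in> roots S m \<Longrightarrow> t \<in> S \<Longrightarrow> sref S m t g \<in> roots S m"
  unfolding mem_roots_iff using word_group_comp word_group_sref by (metis comp_apply)

lemma uminus_root_in_roots:
  assumes "g \<in> roots S m"
  shows "- g \<in> roots S m"
proof -
  obtain w s where ws: "w \<in> word_group S" "s \<in> S" "g = w (simple_root s)"
    using assms by (rule rootsE)
  then have "(w \<circ> sref S m s) (simple_root s) = - g"
    using isometry_uminus[OF isometry_word_group[OF ws(1)] fin_supp_simple_root[OF ws(2)]]
    by (simp only: comp_apply sref_simple_root)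
  then show ?thesis unfolding mem_roots_iff using ws word_group_comp word_group_sref by metis
qed

lemma reflection_simple_root_conj:
  "w \<in> word_group S \<Longrightarrow> s \<in> S \<Longrightarrow> reflection (w (simple_root s)) = w \<circ> sref S m s \<circ> inv w"
  using reflection_conj[OF isometry_word_group fin_supp_simple_root] by (simp add: sref_eq_reflection)

lemma reflection_root_in_word_group:
  assumes "g \<in> roots S m"
  shows "reflection g \<in> word_group S"
proof -
  obtain w s where "w \<in> word_group S" "s \<in> S" "g = w (simple_root s)"
    using assms by (rule rootsE)
  then show ?thesis
    by (simp add: reflection_simple_root_conj word_group_comp word_group_sref word_group_inv)
qed

lemma reflection_root_involutive: "g \<in> roots S m \<Longrightarrow> reflection g \<circ> reflection g = id"
  by (simp add: fun_eq_iff reflection_involutive fin_supp_root bform_root_self)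

lemma inv_reflection_root: "g \<in> roots S m \<Longrightarrow> inv (reflection g) = reflection g"
  by (simp add: reflection_root_involutive inv_unique_comp)

lemma sref_reflection_root_conj:
  assumes "g \<in> roots S m" "t \<in> S"
  shows "sref S m t \<circ> reflection g \<circ> sref S m t = reflection (sref S m t g)"
  using reflection_conj[OF isometry_sref[OF assms(2)] fin_supp_root[OF assms(1)]] inv_sref[OF assms(2)]
  by simp

lemma root_supported_on_pair:
  assumes "x \<in> S" "t \<in> S" "x \<noteq> t" "g \<in> roots S m" "B (simple_root x) g = 0"
    and "\<And>u. u \<in> S \<Longrightarrow> u \<noteq> x \<Longrightarrow> u \<noteq> t \<Longrightarrow> g u = 0"
  shows "g = lin_comb (coxcos x t * g t) (simple_root x) (g t) (simple_root t)"
    and "(g t)\<^sup>2 * (1 - (coxcos x t)\<^sup>2) = 1"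
proof -
  define c where "c = coxcos x t"
  have g: "g = lin_comb (g x) (simple_root x) (g t) (simple_root t)"
  proof
    fix u
    show "g u = lin_comb (g x) (simple_root x) (g t) (simple_root t) u"
      using assms(6)[of u] root_apply_outside[OF assms(4), of u] assms(3)
      by (cases "u = x"; cases "u = t") (auto simp: lin_comb_def simple_root_def)
  qed
  have "B (simple_root x) g = g x - c * g t"
    using assms(1,2) by (subst g) (simp add: bform_lin_comb_right fin_supp_simple_root
        bform_simple_root_self bform_simple_roots c_def)
  then have gx: "g x = c * g t" using assms(5) by simp
  then show "g = lin_comb (coxcos x t * g t) (simple_root x) (g t) (simple_root t)"
    using g by (simp add: c_def)
  have "B (simple_root t) g = - c * g x + g t"
    using assms(1,2) by (subst g) (simp add: bform_lin_comb_right fin_supp_simple_root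
        bform_simple_root_self bform_simple_roots c_def coxcos_sym)
  then have Bt: "B (simple_root t) g = g t * (1 - c\<^sup>2)"
    using gx by (simp add: power2_eq_square algebra_simps)
  have "B g g = g x * B (simple_root x) g + g t * B (simple_root t) g"
    using assms(1,2) by (subst (1) g) (simp add: bform_lin_comb_left fin_supp_simple_root)
  then have "g t * B (simple_root t) g = 1"
    using bform_root_self[OF assms(4)] assms(5) by simp
  then show "(g t)\<^sup>2 * (1 - (coxcos x t)\<^sup>2) = 1"
    using Bt by (simp add: power2_eq_square c_def mult.assoc)
qed

text \<open>For finite m x t, eta x t is the unit vector in the plane of the simple roots of x and t that is
  orthogonal to the simple root of x; its value for m x t infinite is never used.\<close>

definition eta :: "'a \<Rightarrow> 'a \<Rightarrow> 'a \<Rightarrow> real" where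
  "eta x t = lin_comb (coxcos x t / sin (pi / real (the_enat (m x t)))) (simple_root x)
                      (1 / sin (pi / real (the_enat (m x t)))) (simple_root t)"

context
  fixes x t :: 'a and k :: nat
  assumes x: "x \<in> S" and t: "t \<in> S" and x_ne_t: "x \<noteq> t" and k: "k \<ge> 1"
    and m_x_t: "m x t = enat (2 * k)"
begin

private abbreviation "sn \<equiv> sin (pi / real (2 * k))"
private abbreviation "cs \<equiv> cos (pi / real (2 * k))"

private lemma sn_pos: "sn > 0"
  using sin_pi_div_even_pos[OF k] .

private lemma coxcos_x_t: "coxcos x t = cs" and coxcos_t_x: "coxcos t x = cs"
  using m_x_t coxcos_sym[OF x t] by (simp_all add: coxcos_def bcoef_def)

lemma eta_eq: "eta x t = lin_comb (cs / sn) (simple_root x) (1 / sn) (simple_root t)"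
  by (simp add: eta_def m_x_t coxcos_x_t)

lemma fin_supp_eta: "fin_supp (eta x t)"
  unfolding eta_eq by (intro fin_supp_lin_comb fin_supp_simple_root x t)

lemma bform_simple_root_eta: "B (simple_root x) (eta x t) = 0"
  unfolding eta_eq using x t
  by (simp add: bform_lin_comb_right fin_supp_simple_root bform_simple_root_self bform_simple_roots coxcos_x_t)

lemma bform_simple_root_other_eta: "B (simple_root t) (eta x t) = sn"
proof -
  have "B (simple_root t) (eta x t) = (1 - cs\<^sup>2) / sn"
    unfolding eta_eq using x t sn_pos
    by (simp add: bform_lin_comb_right fin_supp_simple_root bform_simple_root_self bform_simple_roots
        coxcos_t_x field_simps power2_eq_square)
  moreover have "1 - cs\<^sup>2 = sn\<^sup>2" by (simp add: sin_squared_eq)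
  ultimately show ?thesis using sn_pos by (simp add: power2_eq_square)
qed

lemma eta_apply_other: "eta x t t = 1 / sn"
  using x_ne_t by (simp add: eta_eq lin_comb_def simple_root_def)

lemma eta_in_roots: "eta x t \<in> roots S m"
proof -
  \<comment> \<open>eta x t is the image of a simple root under the alternating word of length k - 1\<close>
  have U: "cheb_U cs k = 1 / sn" "cheb_U cs (k - 1) = cs / sn" and Suc: "Suc (k - 1) = k"
    using cheb_U_cos_pi_div_even_k[OF k] cheb_U_cos_pi_div_even_k_minus_1[OF k] k by simp_all
  have "eta x t = word_prod (alt_word x t (k - 1)) (simple_root x)" if "even k"
    using word_prod_alt_word_simple_root[OF x t x_ne_t, of "k - 1"] that k U Suc
    by (simp add: eta_eq coxcos_x_t)
  moreover have "eta x t = word_prod (alt_word t x (k - 1)) (simple_root t)" if "odd k"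
    using word_prod_alt_word_simple_root[OF t x x_ne_t[symmetric], of "k - 1"] that k U Suc
    by (simp add: eta_eq coxcos_t_x lin_comb_def fun_eq_iff add.commute)
  ultimately show ?thesis
    unfolding mem_roots_iff using word_prod_in_word_group set_alt_word_subset x t by metis
qed

lemma word_prod_alt_word_eq_reflection_eta: "word_prod (alt_word x t (2 * k - 1)) = reflection (eta x t)"
proof (rule isometry_eqI_plane[OF x t x_ne_t])
  show "(coxcos x t)\<^sup>2 \<noteq> 1" using sn_pos by (simp add: coxcos_x_t cos_squared_eq)
  show "isometry (word_prod (alt_word x t (2 * k - 1)))"
    by (rule isometry_word_prod[OF set_alt_word_subset[OF x t]])
  show "isometry (reflection (eta x t))"
    by (rule isometry_reflection[OF fin_supp_eta bform_root_self[OF eta_in_roots]])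
  show "word_prod (alt_word x t (2 * k - 1)) v = reflection (eta x t) v"
    if "fin_supp v" "B (simple_root x) v = 0" "B (simple_root t) v = 0" for v
  proof -
    have "B (eta x t) v = 0" unfolding eta_eq using that x t by (simp add: bform_lin_comb_left fin_supp_simple_root)
    then show ?thesis by (simp add: reflection_orthogonal word_prod_fixes_orthogonal[OF set_alt_word that(2,3)])
  qed
  have "odd (2 * k - 1)" "Suc (2 * k - 1) = 2 * k" using k by auto
  then have "word_prod (alt_word x t (2 * k - 1)) (simple_root x) = simple_root x"
    using word_prod_alt_word_simple_root[OF x t x_ne_t, of "2 * k - 1"]
      cheb_U_cos_pi_div_even_2k[OF k] cheb_U_cos_pi_div_even_2k_minus_1[OF k]
    by (simp add: coxcos_x_t lin_comb_def fun_eq_iff)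
  then show "word_prod (alt_word x t (2 * k - 1)) (simple_root x) = reflection (eta x t) (simple_root x)"
    using bform_simple_root_eta by (simp add: reflection_orthogonal bform_sym)
  have "2 * k - 1 = Suc (2 * k - 2)" "even (2 * k - 2)" "Suc (2 * k - 2) = 2 * k - 1" using k by auto
  then have "word_prod (alt_word x t (2 * k - 1)) (simple_root t)
      = - lin_comb 1 (simple_root t) (2 * cs) (simple_root x)"
    using word_prod_alt_word_last_simple_root[OF x t, of "2 * k - 2"]
      word_prod_alt_word_simple_root[OF t x x_ne_t[symmetric], of "2 * k - 2"]
      cheb_U_cos_pi_div_even_2k_minus_1[OF k] cheb_U_cos_pi_div_even_2k_minus_2[OF k]
    by (simp add: coxcos_t_x)
  also have "\<dots> = reflection (eta x t) (simple_root t)"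
    using bform_simple_root_other_eta sn_pos
    by (simp add: reflection_def bform_sym eta_eq lin_comb_def fun_eq_iff field_simps)
  finally show "word_prod (alt_word x t (2 * k - 1)) (simple_root t) = reflection (eta x t) (simple_root t)" .
qed

lemma reflection_eta_in_perp_reflections: "reflection (eta x t) \<in> perp_reflections S m x"
proof -
  obtain w s where ws: "w \<in> word_group S" "s \<in> S" "eta x t = w (simple_root s)"
    using eta_in_roots unfolding mem_roots_iff by blast
  then have "reflection (eta x t) = w \<circ> sref S m s \<circ> inv w"
    using reflection_simple_root_conj by simp
  moreover have "bform S m (w (simple_root s)) (simple_root x) = 0"
    using bform_simple_root_eta ws(3) bform_sym by metis
  ultimately show ?thesis
    unfolding perp_reflections_def using ws coxW_eq_word_group by blast
qed

lemma mem_if_reflection_eta_in_word_group: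
  assumes "reflection (eta x t) \<in> word_group J"
  shows "t \<in> J"
proof -
  obtain ws where ws: "set ws \<subseteq> J" "reflection (eta x t) = word_prod ws"
    using assms unfolding word_group_def by blast
  have "eta x t t \<noteq> 0" using eta_apply_other sn_pos by simp
  moreover have "reflection (eta x t) (eta x t) = - eta x t"
    using reflection_self[OF bform_root_self[OF eta_in_roots]] .
  ultimately have "word_prod ws (eta x t) t \<noteq> eta x t t" using ws(2) by simp
  then have "t \<in> set ws" using word_prod_apply_outside by metis
  then show ?thesis using ws(1) by blast
qed

lemma root_supported_on_pair_eq_eta:
  assumes "g \<in> roots S m" "B (simple_root x) g = 0" "g t > 0"
    and "\<And>u. u \<in> S \<Longrightarrow> u \<noteq> x \<Longrightarrow> u \<noteq> t \<Longrightarrow> g u = 0"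
  shows "g = eta x t"
proof -
  have "(g t * sn)\<^sup>2 = 1"
    using root_supported_on_pair(2)[OF x t x_ne_t assms(1,2,4)]
    by (simp add: coxcos_x_t sin_squared_eq power_mult_distrib)
  then have "g t * sn = 1 \<or> g t * sn = -1" by (simp only: power2_eq_1_iff)
  moreover have "g t * sn > 0" using assms(3) sn_pos by simp
  ultimately have "g t * sn = 1" by linarith
  then have "g t = 1 / sn" using sn_pos by (simp add: field_simps)
  then have "lin_comb (coxcos x t * g t) (simple_root x) (g t) (simple_root t) = eta x t"
    by (simp add: eta_eq coxcos_x_t)
  with root_supported_on_pair(1)[OF x t x_ne_t assms(1,2,4)] show ?thesis by (rule trans)
qed

end

end

locale even_coxeter_system = coxeter_system +
  assumes even_coxeter: "even_coxeter S m"
begin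

lemma coxeter_matrix_entry_cases:
  assumes "a \<in> S" "b \<in> S" "a \<noteq> b"
  obtains "m a b = \<infinity>" "coxcos a b = 1"
    | k where "k \<ge> 1" "m a b = enat (2 * k)" "coxcos a b = cos (pi / real (2 * k))"
proof (cases "m a b")
  case (enat n)
  then obtain k where k: "m a b = enat (2 * k)"
    using even_coxeter assms unfolding even_coxeter_def by fastforce
  have "m a b \<ge> 2" using coxeter_matrix assms unfolding coxeter_matrix_def by metis
  then have "k \<ge> 1" using k by (cases k) (auto simp: numeral_eq_enat)
  then show ?thesis using that(2) k by (simp add: coxcos_def bcoef_def)
qed (use that(1) in \<open>simp add: coxcos_def bcoef_def\<close>)

lemma dihedral_reduced_alt_word:
  assumes "a \<in> S" "b \<in> S" "a \<noteq> b" "u \<in> word_group {a, b}"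
    and "word_length {a, b} (u \<circ> sref S m a) \<ge> word_length {a, b} u"
  shows "u = word_prod (alt_word a b (word_length {a, b} u))"
proof -
  obtain ws where ws: "set ws \<subseteq> {a, b}" "length ws = word_length {a, b} u" "word_prod ws = u"
    using reduced_word_exists[OF assms(4)] by blast
  have "ws = [] \<or> last ws = b"
  proof (rule ccontr)
    assume "\<not> (ws = [] \<or> last ws = b)"
    then obtain xs where xs: "ws = xs @ [a]" using ws(1) by (cases ws rule: rev_cases) auto
    then have "u \<circ> sref S m a = word_prod xs" using ws(3) word_prod_snoc_sref assms(1) by blast
    then have "word_length {a, b} (u \<circ> sref S m a) \<le> length xs"
      using word_length_le[of xs "{a, b}"] ws(1) xs by simp
    then show False using assms(5) ws(2) xs by simp
  qed
  moreover have "\<nexists>xs ys c. ws = xs @ [c, c] @ ys"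
    using reduced_word_no_square[OF ws(1)] ws(2,3) assms(1,2) by simp
  ultimately show ?thesis using alt_word_if_no_square[OF ws(1) assms(3)] ws by simp
qed

lemma dihedral_reduced_length_less:
  assumes "a \<in> S" "b \<in> S" "a \<noteq> b" "k \<ge> 1" "coxcos a b = cos (pi / real (2 * k))"
    and "word_length {a, b} (word_prod (alt_word a b n) \<circ> sref S m a) \<ge> n"
  shows "n < 2 * k"
proof (rule ccontr)
  assume "\<not> n < 2 * k"
  then obtain r where r: "n = r + 2 * k" by (metis add.commute le_add_diff_inverse not_less)
  obtain j where j: "2 * k = Suc j" using assms(4) by (cases k) auto
  have "word_prod (alt_word a b n) = word_prod (alt_word a b r) \<circ> word_prod (alt_word a b (2 * k))"
    using r alt_word_add[of a b r "2 * k"] by (simp add: word_prod_append)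
  also have "\<dots> = word_prod (alt_word a b r) \<circ> word_prod (alt_word b a (Suc j))"
    using braid_relation[OF assms(1-5)] j by simp
  also have "\<dots> = word_prod ((alt_word a b r @ alt_word a b j) @ [a])"
    by (simp add: word_prod_append)
  finally have "word_prod (alt_word a b n) \<circ> sref S m a = word_prod (alt_word a b r @ alt_word a b j)"
    using word_prod_snoc_sref[OF assms(1), of "alt_word a b r @ alt_word a b j"] by simp
  then have "word_length {a, b} (word_prod (alt_word a b n) \<circ> sref S m a) \<le> r + j"
    using word_length_le[of "alt_word a b r @ alt_word a b j" "{a, b}"] set_alt_word[of a b] by auto
  then show False using assms(6) r j by simp
qed

lemma dihedral_simple_root_nonneg:
  assumes "a \<in> S" "b \<in> S" "a \<noteq> b" "u \<in> word_group {a, b}"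
    and "word_length {a, b} (u \<circ> sref S m a) \<ge> word_length {a, b} u"
  obtains p q where "p \<ge> 0" "q \<ge> 0" "u (simple_root a) = lin_comb p (simple_root a) q (simple_root b)"
proof -
  define n where "n = word_length {a, b} u"
  have u: "u = word_prod (alt_word a b n)"
    unfolding n_def by (rule dihedral_reduced_alt_word[OF assms])
  have "cheb_U (coxcos a b) n \<ge> 0 \<and> cheb_U (coxcos a b) (Suc n) \<ge> 0"
  proof (cases rule: coxeter_matrix_entry_cases[OF assms(1-3)])
    case 1
    then show ?thesis by (simp add: cheb_U_1)
  next
    case (2 k)
    have "n \<le> word_length {a, b} (word_prod (alt_word a b n) \<circ> sref S m a)"
      using assms(5)[folded n_def] u by simp
    then have "n < 2 * k" by (rule dihedral_reduced_length_less[OF assms(1-3) 2(1,3)])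
    then show ?thesis using cheb_U_cos_pi_div_even_nonneg[OF 2(1)] 2(3) by simp
  qed
  moreover have "u (simple_root a) = (if even n
      then lin_comb (cheb_U (coxcos a b) (Suc n)) (simple_root a) (cheb_U (coxcos a b) n) (simple_root b)
      else lin_comb (cheb_U (coxcos a b) n) (simple_root a) (cheb_U (coxcos a b) (Suc n)) (simple_root b))"
    using word_prod_alt_word_simple_root[OF assms(1-3), of n] u by simp
  ultimately show ?thesis using that by (cases "even n") (simp_all, blast+)
qed

definition nonneg :: "('a \<Rightarrow> real) \<Rightarrow> bool" where
  "nonneg v \<longleftrightarrow> (\<forall>t\<in>S. v t \<ge> 0)"

theorem simple_root_image_nonneg:
  assumes "w \<in> word_group S" "s \<in> S" "word_length S (w \<circ> sref S m s) \<ge> word_length S w"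
  shows "nonneg (w (simple_root s))"
  using assms
proof (induction "word_length S w" arbitrary: w s rule: less_induct)
  case less
  show ?case
  proof (cases "word_length S w = 0")
    case True
    then show ?thesis using word_length_eq_0 less.prems by (force simp: nonneg_def simple_root_def)
  next
    case False
    \<comment> \<open>factor w through the dihedral subgroup of s and the last letter s' of a reduced word\<close>
    obtain ws where ws: "set ws \<subseteq> S" "length ws = word_length S w" "word_prod ws = w"
      using reduced_word_exists[OF less.prems(1)] by blast
    then obtain xs s' where xs: "ws = xs @ [s']" using False by (cases ws rule: rev_cases) auto
    have s': "s' \<in> S" and xs_S: "set xs \<subseteq> S" using ws(1) xs by auto
    have w_s': "w \<circ> sref S m s' = word_prod xs" using ws(3) xs word_prod_snoc_sref[OF s', of xs] by simp
    have shorter: "word_length S (w \<circ> sref S m s') < word_length S w"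
      using w_s' word_length_le[OF xs_S] ws(2) xs by simp
    then have "s \<noteq> s'" using less.prems(3) by auto
    define I where "I = {s, s'}"
    have I: "I \<subseteq> S" "s \<in> I" "s' \<in> I" using less.prems(2) s' by (auto simp: I_def)
    have w: "w = (w \<circ> sref S m s') \<circ> sref S m s'" using sref_sref[OF s'] by (simp add: comp_assoc)
    have "word_length S (w \<circ> sref S m s') + word_length I (sref S m s') \<le> word_length S w"
      using shorter word_length_sref[OF I(3)] by linarith
    moreover have "w \<circ> sref S m s' \<in> word_group S" using w_s' word_prod_in_word_group[OF xs_S] by simp
    ultimately obtain v u where vu: "v \<in> word_group S" "u \<in> word_group I" "w = v \<circ> u"
        "word_length S v + word_length I u \<le> word_length S w"
        "word_length S v \<le> word_length S (w \<circ> sref S m s')"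
        and no_descent: "\<And>r. r \<in> I \<Longrightarrow> word_length S (v \<circ> sref S m r) \<ge> word_length S v"
      using parabolic_factorization[OF I(1) _ word_group_sref[OF I(3)] w] by blast
    have v_shorter: "word_length S v < word_length S w" using vu(5) shorter by linarith
    have "nonneg (v (simple_root s))" "nonneg (v (simple_root s'))"
      using less.hyps[OF v_shorter vu(1)] I no_descent by auto
    moreover obtain p q where "p \<ge> 0" "q \<ge> 0" "u (simple_root s) = lin_comb p (simple_root s) q (simple_root s')"
      using dihedral_simple_root_nonneg[OF less.prems(2) s' \<open>s \<noteq> s'\<close>] vu(2)
        parabolic_factor_no_descent[OF I(1) vu(1-4) I(2) less.prems(3)] unfolding I_def by blast
    moreover have "v (lin_comb p (simple_root s) q (simple_root s'))
        = lin_comb p (v (simple_root s)) q (v (simple_root s'))"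
      using isometry_lin_comb[OF isometry_word_group[OF vu(1)]] fin_supp_simple_root less.prems(2) s' by blast
    ultimately show ?thesis using vu(3) by (simp add: nonneg_def lin_comb_def)
  qed
qed

lemma word_length_sref_less:
  assumes "w \<in> word_group S" "s \<in> S" "\<not> nonneg (w (simple_root s))"
  shows "word_length S (w \<circ> sref S m s) < word_length S w"
  using simple_root_image_nonneg[OF assms(1,2)] assms(3) by force

lemma root_nonneg_or_nonpos:
  assumes "g \<in> roots S m"
  shows "nonneg g \<or> nonneg (- g)"
proof -
  obtain w s where ws: "w \<in> word_group S" "s \<in> S" "g = w (simple_root s)"
    using assms by (rule rootsE)
  have "(w \<circ> sref S m s) (simple_root s) = - g"
    using isometry_uminus[OF isometry_word_group[OF ws(1)] fin_supp_simple_root[OF ws(2)]] ws(3)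
    by (simp only: comp_apply sref_simple_root[OF ws(2)])
  moreover have "word_length S (w \<circ> sref S m s \<circ> sref S m s) = word_length S w"
    using sref_sref[OF ws(2)] by (simp add: comp_assoc)
  moreover have "w \<circ> sref S m s \<in> word_group S" using ws by (simp add: word_group_comp word_group_sref)
  ultimately show ?thesis
    using simple_root_image_nonneg[OF ws(1,2)] simple_root_image_nonneg[of "w \<circ> sref S m s" s] ws
    by (metis nat_le_linear)
qed

lemma exists_simple_root_pairing_pos:
  assumes "g \<in> roots S m" "nonneg g"
  obtains t where "t \<in> S" "g t > 0" "B (simple_root t) g > 0"
proof (rule ccontr)
  assume no_t: "\<not> thesis"
  let ?A = "vsupp S g"
  have A: "finite ?A" "?A \<subseteq> S" using fin_supp_root[OF assms(1)] by (auto simp: fin_supp_def vsupp_def)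
  have "B g g = (\<Sum>s\<in>?A. \<Sum>t\<in>?A. g s * g t * bcoef m s t)"
    by (rule bform_expand[OF A(1) subset_refl A(2) A(1) subset_refl A(2)])
  also have "\<dots> = (\<Sum>s\<in>?A. g s * B (simple_root s) g)"
    using A bform_simple_root_left[OF _ A(1) subset_refl A(2)]
    by (intro sum.cong refl) (auto simp: sum_distrib_left mult.assoc)
  also have "\<dots> \<le> 0"
  proof (intro sum_nonpos)
    fix s assume s: "s \<in> ?A"
    then have "s \<in> S" "g s > 0" using assms(2) by (auto simp: nonneg_def vsupp_def less_le)
    then have "\<not> B (simple_root s) g > 0" using no_t that by blast
    then show "g s * B (simple_root s) g \<le> 0" using \<open>g s > 0\<close> by (simp add: mult_nonneg_nonpos)
  qed
  finally show False using bform_root_self[OF assms(1)] by simp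
qed

lemma sref_root_shortens_reflection:
  assumes g: "g \<in> roots S m" "nonneg g" and t: "t \<in> S" "B (simple_root t) g > 0"
    and r: "r \<in> S" "r \<noteq> t" "g r \<noteq> 0"
  shows "nonneg (sref S m t g)"
    and "word_length S (reflection (sref S m t g)) < word_length S (reflection g)"
proof -
  \<comment> \<open>both R s_t and s_t R send the simple root of t to a vector with a negative coordinate\<close>
  define R where "R = reflection g"
  define p where "p = B (simple_root t) g"
  have R: "R \<in> word_group S" using reflection_root_in_word_group[OF g(1)] by (simp add: R_def)
  have g_r: "g r > 0" using g(2) r by (auto simp: nonneg_def less_le)
  have "sref S m t g \<in> roots S m" "sref S m t g r > 0"
    using sref_root_in_roots[OF g(1) t(1)] g_r sref_apply_other[OF r(2)] by simp_all
  then show nonneg: "nonneg (sref S m t g)"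
    using root_nonneg_or_nonpos r(1) by (force simp: nonneg_def)
  have R_t: "R (simple_root t) = lin_comb 1 (simple_root t) (- 2 * p) g"
    by (simp add: R_def reflection_lin_comb p_def bform_sym)
  have "R (simple_root t) r < 0"
    using t(2) g_r r(2) unfolding R_t by (simp add: lin_comb_def simple_root_def p_def)
  then have shorter1: "word_length S (R \<circ> sref S m t) < word_length S R"
    using word_length_sref_less[OF R t(1)] r(1) by (force simp: nonneg_def)
  have tR: "sref S m t \<circ> R \<in> word_group S" using word_group_comp[OF word_group_sref[OF t(1)] R] .
  have tR_t: "(sref S m t \<circ> R) (simple_root t) = lin_comb 1 (- simple_root t) (- 2 * p) (sref S m t g)"
    using R_t isometry_lin_comb[OF isometry_sref[OF t(1)] fin_supp_simple_root[OF t(1)] fin_supp_root[OF g(1)]]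
    by (simp add: sref_simple_root[OF t(1)])
  have "p > 0" using t(2) by (simp add: p_def)
  then have "0 \<le> 2 * p * sref S m t g t" using nonneg t(1) by (simp add: nonneg_def)
  then have "(sref S m t \<circ> R) (simple_root t) t < 0"
    unfolding tR_t by (simp add: lin_comb_def simple_root_def)
  then have shorter2: "word_length S (sref S m t \<circ> R \<circ> sref S m t) < word_length S (sref S m t \<circ> R)"
    using word_length_sref_less[OF tR t(1)] t(1) by (force simp: nonneg_def)
  have "inv (sref S m t \<circ> R) = R \<circ> sref S m t"
    using isometry_bij[OF isometry_sref[OF t(1)]] isometry_bij[OF isometry_word_group[OF R]]
      inv_reflection_root[OF g(1)] inv_sref[OF t(1)] by (simp add: o_inv_distrib R_def)
  then have "word_length S (sref S m t \<circ> R) = word_length S (R \<circ> sref S m t)"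
    using word_length_inv[OF tR] by simp
  then show "word_length S (reflection (sref S m t g)) < word_length S (reflection g)"
    using shorter1 shorter2 sref_reflection_root_conj[OF g(1) t(1)] by (simp add: R_def)
qed

text \<open>Along the alternating word the pairings with the two simple roots follow the Chebyshev
  recursion, so every step is an instance of the previous lemma as long as they stay positive.\<close>

lemma alt_word_shortens_reflection:
  assumes x: "x \<in> S" and t: "t \<in> S" "x \<noteq> t" and g: "g \<in> roots S m" "nonneg g"
    and g_x: "B (simple_root x) g = 0" and g_t: "B (simple_root t) g > 0"
    and r: "r \<in> S" "r \<noteq> x" "r \<noteq> t" "g r \<noteq> 0"
  shows "(\<forall>j. 1 \<le> j \<and> j \<le> i \<longrightarrow> cheb_U (coxcos x t) j > 0) \<Longrightarrow>
    word_prod (alt_word x t i) g \<in> roots S m \<and> nonneg (word_prod (alt_word x t i) g) \<and>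
    word_prod (alt_word x t i) g r \<noteq> 0 \<and>
    B (simple_root (if even i then t else x)) (word_prod (alt_word x t i) g)
      = B (simple_root t) g * cheb_U (coxcos x t) (Suc i) \<and>
    B (simple_root (if even i then x else t)) (word_prod (alt_word x t i) g)
      = - (B (simple_root t) g * cheb_U (coxcos x t) i) \<and>
    word_length S (reflection (word_prod (alt_word x t i) g)) + i \<le> word_length S (reflection g)"
proof (induction i)
  case 0
  then show ?case using g g_x r by simp
next
  case (Suc i)
  define c where "c = coxcos x t"
  define p where "p = B (simple_root t) g"
  define h where "h = word_prod (alt_word x t i) g"
  define a where "a = (if even i then t else x)"
  define b where "b = (if even i then x else t)"
  have ab: "a \<in> S" "b \<in> S" "a \<noteq> b" "coxcos b a = c" "r \<noteq> a"
    using x t r coxcos_sym[OF x t(1)] by (auto simp: a_def b_def c_def)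
  have IH: "h \<in> roots S m" "nonneg h" "h r \<noteq> 0" "B (simple_root a) h = p * cheb_U c (Suc i)"
      "B (simple_root b) h = - (p * cheb_U c i)" "word_length S (reflection h) + i \<le> word_length S (reflection g)"
    using Suc by (auto simp: h_def a_def b_def c_def p_def)
  have step: "word_prod (alt_word x t (Suc i)) g = sref S m a h"
    by (simp add: alt_word_Suc_Cons a_def h_def del: alt_word.simps(2))
  have "B (simple_root a) h > 0" using IH(4) g_t Suc.prems by (simp add: p_def c_def)
  note shorter = sref_root_shortens_reflection[OF IH(1,2) ab(1) this r(1) ab(5) IH(3)]
  have "B (simple_root a) (sref S m a h) = - (p * cheb_U c (Suc i))"
    unfolding sref_eq_reflection reflection_lin_comb using fin_supp_root[OF IH(1)] fin_supp_simple_root[OF ab(1)] IH(4)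
    by (simp add: bform_lin_comb_right bform_simple_root_self[OF ab(1)])
  moreover have "B (simple_root b) (sref S m a h) = p * cheb_U c (Suc (Suc i))"
    unfolding sref_eq_reflection reflection_lin_comb using fin_supp_root[OF IH(1)] fin_supp_simple_root[OF ab(1)] IH(4,5)
    by (simp add: bform_lin_comb_right bform_simple_roots ab algebra_simps)
  ultimately show ?case
    unfolding step using sref_root_in_roots[OF IH(1) ab(1)] shorter IH(3,6) sref_apply_other[OF ab(5)]
    by (cases "even i") (simp_all add: a_def b_def c_def p_def)
qed

lemma coxeter_matrix_entry_finite_if_pairing_pos:
  assumes x: "x \<in> S" and t: "t \<in> S" "x \<noteq> t" and g: "g \<in> roots S m" "nonneg g"
    and g_x: "B (simple_root x) g = 0" and g_t: "B (simple_root t) g > 0"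
  shows "m x t \<noteq> \<infinity>"
proof
  assume "m x t = \<infinity>"
  then have c: "coxcos x t = 1" by (simp add: coxcos_def bcoef_def)
  show False
  proof (cases "\<exists>r\<in>S. r \<noteq> x \<and> r \<noteq> t \<and> g r \<noteq> 0")
    case True
    then obtain r where r: "r \<in> S" "r \<noteq> x" "r \<noteq> t" "g r \<noteq> 0" by blast
    define i where "i = Suc (word_length S (reflection g))"
    have "\<forall>j. 1 \<le> j \<and> j \<le> i \<longrightarrow> cheb_U (coxcos x t) j > 0" by (simp add: c cheb_U_1)
    then have "word_length S (reflection (word_prod (alt_word x t i) g)) + i \<le> word_length S (reflection g)"
      using alt_word_shortens_reflection[OF x t g g_x g_t r] by blast
    then show False by (simp add: i_def)
  next
    case False
    then show False using root_supported_on_pair(2)[OF x t g(1) g_x] c by auto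
  qed
qed

lemma reflection_eta_conj_shorter:
  assumes x: "x \<in> S" and t: "t \<in> S" "x \<noteq> t" and k: "k \<ge> 1" "m x t = enat (2 * k)"
    and g: "g \<in> roots S m" "nonneg g" and g_x: "B (simple_root x) g = 0" and g_t: "B (simple_root t) g > 0"
    and r: "r \<in> S" "r \<noteq> x" "r \<noteq> t" "g r \<noteq> 0"
  obtains d where "d \<in> roots S m" "B (simple_root x) d = 0"
    "word_length S (reflection d) < word_length S (reflection g)"
    "reflection g = reflection (eta x t) \<circ> reflection d \<circ> reflection (eta x t)"
proof -
  define i where "i = 2 * k - 1"
  define d where "d = word_prod (alt_word x t i) g"
  have c: "coxcos x t = cos (pi / real (2 * k))" using k(2) by (simp add: coxcos_def bcoef_def)
  have i: "odd i" "Suc i = 2 * k" "i \<ge> 1" using k(1) by (auto simp: i_def)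
  have "\<forall>j. 1 \<le> j \<and> j \<le> i \<longrightarrow> cheb_U (coxcos x t) j > 0"
    using cheb_U_cos_pi_div_even_pos[OF k(1)] c by (auto simp: i_def)
  then have d: "d \<in> roots S m" "B (simple_root x) d = B (simple_root t) g * cheb_U (coxcos x t) (Suc i)"
      "word_length S (reflection d) + i \<le> word_length S (reflection g)"
    using alt_word_shortens_reflection[OF x t g g_x g_t r, of i] i(1) unfolding d_def by auto
  have "B (simple_root x) d = 0" using d(2) i(2) cheb_U_cos_pi_div_even_2k[OF k(1)] c by simp
  moreover have "word_length S (reflection d) < word_length S (reflection g)" using d(3) i(3) by simp
  moreover have "reflection d = reflection (eta x t) \<circ> reflection g \<circ> reflection (eta x t)"
    using reflection_conj[OF isometry_reflection[OF fin_supp_eta bform_root_self] fin_supp_root[OF g(1)]]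
      inv_reflection_root eta_in_roots word_prod_alt_word_eq_reflection_eta x t k
    unfolding d_def i_def by metis
  then have "reflection (eta x t) \<circ> reflection d \<circ> reflection (eta x t)
      = (reflection (eta x t) \<circ> reflection (eta x t)) \<circ> reflection g \<circ> (reflection (eta x t) \<circ> reflection (eta x t))"
    by (simp add: comp_assoc)
  then have "reflection g = reflection (eta x t) \<circ> reflection d \<circ> reflection (eta x t)"
    by (simp only: reflection_root_involutive[OF eta_in_roots[OF x t k]] comp_id id_comp)
  ultimately show ?thesis using that d(1) by blast
qed

definition eta_reflections :: "'a \<Rightarrow> (('a \<Rightarrow> real) \<Rightarrow> 'a \<Rightarrow> real) set" where
  "eta_reflections x = (\<lambda>t. reflection (eta x t)) ` {t \<in> S. t \<noteq> x \<and> m x t \<noteq> \<infinity>}"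

lemma reflection_eta_in_eta_reflections:
  "t \<in> S \<Longrightarrow> x \<noteq> t \<Longrightarrow> m x t = enat n \<Longrightarrow> reflection (eta x t) \<in> eta_reflections x"
  by (auto simp: eta_reflections_def)

theorem reflection_perp_root_in_gen_group:
  assumes x: "x \<in> S" and "g \<in> roots S m" "B (simple_root x) g = 0"
  shows "reflection g \<in> gen_group (eta_reflections x)"
  using assms(2,3)
proof (induction "word_length S (reflection g)" arbitrary: g rule: less_induct)
  case less
  have "\<exists>g'. g' \<in> roots S m \<and> nonneg g' \<and> B (simple_root x) g' = 0 \<and> reflection g' = reflection g"
  proof (cases "nonneg g")
    case False
    then show ?thesis
      using root_nonneg_or_nonpos[OF less.prems(1)] uminus_root_in_roots[OF less.prems(1)]
        reflection_uminus[of g] bform_uminus_right[of "simple_root x" g] less.prems(2) by auto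
  qed (use less.prems in blast)
  then obtain g' where g': "g' \<in> roots S m" "nonneg g'" "B (simple_root x) g' = 0" "reflection g' = reflection g"
    by blast
  obtain t where t: "t \<in> S" "g' t > 0" "B (simple_root t) g' > 0"
    using exists_simple_root_pairing_pos[OF g'(1,2)] by blast
  have xt: "x \<noteq> t" using t(3) g'(3) by auto
  obtain k where k: "k \<ge> 1" "m x t = enat (2 * k)"
    using coxeter_matrix_entry_cases[OF x t(1) xt]
      coxeter_matrix_entry_finite_if_pairing_pos[OF x t(1) xt g'(1-3) t(3)] by metis
  have eta: "reflection (eta x t) \<in> gen_group (eta_reflections x)"
    using reflection_eta_in_eta_reflections[OF t(1) xt k(2)] by (rule gen_base)
  show ?case
  proof (cases "\<exists>r\<in>S. r \<noteq> x \<and> r \<noteq> t \<and> g' r \<noteq> 0")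
    case True
    then obtain r where r: "r \<in> S" "r \<noteq> x" "r \<noteq> t" "g' r \<noteq> 0" by blast
    obtain d where d: "d \<in> roots S m" "B (simple_root x) d = 0"
        "word_length S (reflection d) < word_length S (reflection g')"
        "reflection g' = reflection (eta x t) \<circ> reflection d \<circ> reflection (eta x t)"
      using reflection_eta_conj_shorter[OF x t(1) xt k g'(1-3) t(3) r] by blast
    have "reflection d \<in> gen_group (eta_reflections x)"
      using less.hyps d(1-3) g'(4) by simp
    then show ?thesis using d(4) g'(4) eta by (metis gen_comp)
  next
    case False
    then have "g' = eta x t" using root_supported_on_pair_eq_eta[OF x t(1) xt k g'(1,3) t(2)] by blast
    then show ?thesis using g'(4) eta by simp
  qed
qed

lemma perp_reflections_subset_word_group: "perp_reflections S m x \<subseteq> word_group S"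
  unfolding perp_reflections_def coxW_eq_word_group
  by (auto intro!: word_group_comp word_group_sref word_group_inv)

lemma Wperp_eq_gen_group_eta_reflections:
  assumes x: "x \<in> S"
  shows "Wperp S m x = gen_group (eta_reflections x)"
proof
  have "eta_reflections x \<subseteq> perp_reflections S m x"
  proof
    fix f assume "f \<in> eta_reflections x"
    then obtain t where t: "t \<in> S" "x \<noteq> t" "m x t \<noteq> \<infinity>" "f = reflection (eta x t)"
      by (auto simp: eta_reflections_def)
    then obtain k where "k \<ge> 1" "m x t = enat (2 * k)"
      using coxeter_matrix_entry_cases[OF x t(1,2)] by metis
    then show "f \<in> perp_reflections S m x" using reflection_eta_in_perp_reflections x t by simp
  qed
  then show "gen_group (eta_reflections x) \<subseteq> Wperp S m x"
    unfolding Wperp_def by (intro gen_group_mono) (auto intro: gen_base)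
  have "perp_reflections S m x \<subseteq> gen_group (eta_reflections x)"
  proof
    fix f assume "f \<in> perp_reflections S m x"
    then obtain w s where ws: "f = w \<circ> sref S m s \<circ> inv w" "w \<in> word_group S" "s \<in> S"
        "B (w (simple_root s)) (simple_root x) = 0"
      unfolding perp_reflections_def coxW_eq_word_group by blast
    then have "f = reflection (w (simple_root s))" "w (simple_root s) \<in> roots S m"
      using reflection_simple_root_conj mem_roots_iff by auto
    then show "f \<in> gen_group (eta_reflections x)"
      using reflection_perp_root_in_gen_group[OF x] ws(4) bform_sym by metis
  qed
  then show "Wperp S m x \<subseteq> gen_group (eta_reflections x)"
    unfolding Wperp_def by (rule gen_group_mono)
qed

lemma Wperp_finitely_generated:
  assumes "x \<in> S" "finite {s \<in> S. m x s < \<infinity>}"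
  shows "finitely_generated (Wperp S m x)"
proof -
  have "finite (eta_reflections x)"
    unfolding eta_reflections_def by (rule finite_imageI, rule finite_subset[OF _ assms(2)]) auto
  moreover have "eta_reflections x \<subseteq> Wperp S m x"
    using Wperp_eq_gen_group_eta_reflections[OF assms(1)] by (auto intro: gen_base)
  ultimately show ?thesis
    unfolding finitely_generated_def using Wperp_eq_gen_group_eta_reflections[OF assms(1)] by blast
qed

lemma finitely_generated_subset_word_group:
  assumes "finitely_generated G" "G \<subseteq> word_group S"
  obtains J where "finite J" "J \<subseteq> S" "G \<subseteq> word_group J"
proof -
  obtain F where F: "finite F" "F \<subseteq> G" "gen_group F = G"
    using assms(1) by (auto simp: finitely_generated_def)
  then have "\<forall>f\<in>F. \<exists>ws. set ws \<subseteq> S \<and> f = word_prod ws" using assms(2) by (auto simp: word_group_def)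
  from bchoice[OF this] obtain word where word: "\<forall>f\<in>F. set (word f) \<subseteq> S \<and> f = word_prod (word f)"
    by blast
  define J where "J = (\<Union>f\<in>F. set (word f))"
  have J: "finite J" "J \<subseteq> S" using F(1) word by (auto simp: J_def)
  have "F \<subseteq> word_group J"
  proof
    fix f assume "f \<in> F"
    then have "set (word f) \<subseteq> J" "f = word_prod (word f)" using word by (auto simp: J_def)
    then show "f \<in> word_group J" using word_prod_in_word_group by metis
  qed
  then have "G \<subseteq> word_group J"
    unfolding F(3)[symmetric] by (rule gen_group_subset_word_group[OF _ J(2)])
  then show ?thesis using that J by blast
qed

lemma finite_if_Wperp_finitely_generated:
  assumes x: "x \<in> S" and "finitely_generated (Wperp S m x)"
  shows "finite {s \<in> S. m x s < \<infinity>}"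
proof -
  have "Wperp S m x \<subseteq> word_group S"
    unfolding Wperp_def by (rule gen_group_subset_word_group[OF perp_reflections_subset_word_group subset_refl])
  then obtain J where J: "finite J" "J \<subseteq> S" "Wperp S m x \<subseteq> word_group J"
    using finitely_generated_subset_word_group assms(2) by blast
  have "s \<in> J" if s: "s \<in> S" "s \<noteq> x" "m x s < \<infinity>" for s
  proof -
    have "m x s \<noteq> \<infinity>" using s(3) by simp
    then obtain k where k: "k \<ge> 1" "m x s = enat (2 * k)"
      using coxeter_matrix_entry_cases[OF x s(1) s(2)[symmetric]] by metis
    have "reflection (eta x s) \<in> Wperp S m x"
      using reflection_eta_in_perp_reflections[OF x s(1) s(2)[symmetric] k] unfolding Wperp_def by (rule gen_base)
    then show "s \<in> J" using mem_if_reflection_eta_in_word_group[OF x s(1) s(2)[symmetric] k] J(3) by blast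
  qed
  then have "{s \<in> S. m x s < \<infinity>} \<subseteq> insert x J" by auto
  then show ?thesis using J(1) finite_subset by blast
qed

end

theorem corollary4p17:
  fixes S :: "'a set" and m :: "'a \<Rightarrow> 'a \<Rightarrow> enat" and x :: 'a
  assumes "coxeter_matrix S m"
    and "even_coxeter S m"
    and "x \<in> S"
  shows "finitely_generated (Wperp S m x) \<longleftrightarrow> finite {s \<in> S. m x s < \<infinity>}"
proof -
  interpret even_coxeter_system S m
    using assms(1,2) by unfold_locales
  show ?thesis
    using finite_if_Wperp_finitely_generated Wperp_finitely_generated assms(3) by blast
qed

end
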